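(* Let $R(3,n)$ be a rectangular supergrid graph with $n\ge 2$, let $s,t$ be two distinct vertices of it, and let $w=(1,1)$, $z=(2,1)$. Assume that the following conditions fail: (F1) $n=2$ and $s_x=t_x=2$ (i.e. $\{s,t\}$ is a vertex cut of $R(3,2)$); (F2) either $n=2$ and $\{s,t\}\in\{\{(1,1),(2,1)\},\{(1,1),(2,2)\},\{(2,1),(1,2)\}\}$, or $n\ge 3$ and $\{s,t\}=\{w,z\}$. If $s=z$ or $t=z$, then there exists a Hamiltonian $(s,t)$-path $Q$ of $R(3,n)$ such that the edge $(w,z)$ belongs to $Q$.
   Context: The rectangular supergrid graph $R(m,n)$ has vertex set $\{(x,y)\in\mathbb{Z}^2:1\le x\le m,\ 1\le y\le n\}$, two distinct vertices $u=(u_x,u_y)$, $v=(v_x,v_y)$ being adjacent iff $|u_x-v_x|\le 1$ and $|u_y-v_y|\le 1$. A Hamiltonian $(s,t)$-path is a simple path from $s$ to $t$ visiting every vertex exactly once. *)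

theory Defs
  imports Main
begin

type_synonym vertex = "int \<times> int"

definition supergrid_vertices :: "nat \<Rightarrow> nat \<Rightarrow> vertex set" where
  "supergrid_vertices m n = {(x, y). 1 \<le> x \<and> x \<le> int m \<and> 1 \<le> y \<and> y \<le> int n}"

definition supergrid_adj :: "nat \<Rightarrow> nat \<Rightarrow> vertex \<Rightarrow> vertex \<Rightarrow> bool" where
  "supergrid_adj m n u v \<longleftrightarrow> u \<in> supergrid_vertices m n \<and> v \<in> supergrid_vertices m n \<and> u \<noteq> v
     \<and> \<bar>fst u - fst v\<bar> \<le> 1 \<and> \<bar>snd u - snd v\<bar> \<le> 1"

definition is_path :: "nat \<Rightarrow> nat \<Rightarrow> vertex list \<Rightarrow> bool" where
  "is_path m n P \<longleftrightarrow> P \<noteq> [] \<and> distinct P \<and> set P \<subseteq> supergrid_vertices m n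
     \<and> (\<forall>i. Suc i < length P \<longrightarrow> supergrid_adj m n (P ! i) (P ! Suc i))"

definition ham_path :: "nat \<Rightarrow> nat \<Rightarrow> vertex \<Rightarrow> vertex \<Rightarrow> vertex list \<Rightarrow> bool" where
  "ham_path m n s t P \<longleftrightarrow> is_path m n P \<and> set P = supergrid_vertices m n
     \<and> hd P = s \<and> last P = t"

definition path_has_edge :: "vertex list \<Rightarrow> vertex \<Rightarrow> vertex \<Rightarrow> bool" where
  "path_has_edge P u v \<longleftrightarrow> (\<exists>i. Suc i < length P \<and>
     ((P ! i = u \<and> P ! Suc i = v) \<or> (P ! i = v \<and> P ! Suc i = u)))"

end

theory Submission
  imports Defs
begin

(*
  By symmetry (reversing the path) we may take s = z. The claim is strengthened to an invariant
  that survives adding rows: for every admissible endpoint t there is a Hamiltonian path from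
  z = (2,1) to t that starts with the edge zw and uses an edge inside the top row. Detouring that
  top edge through a new row turns such a path for R(3,n) into one for R(3,n+1) with the same
  endpoints; this covers every t below the top row. For t in the top row, a path of R(3,n-2)
  ending at (3,n-2) is continued by a Hamiltonian path of the last two rows ending at t.
*)

lemma is_path_iff_successively:
  "is_path m n P \<longleftrightarrow> P \<noteq> [] \<and> distinct P \<and> set P \<subseteq> supergrid_vertices m n
     \<and> successively (supergrid_adj m n) P"
  unfolding is_path_def successively_conv_nth by blast

lemma mem_supergrid_vertices [simp]:
  "(x, y) \<in> supergrid_vertices m n \<longleftrightarrow> 1 \<le> x \<and> x \<le> int m \<and> 1 \<le> y \<and> y \<le> int n"
  by (simp add: supergrid_vertices_def)

lemma supergrid_vertices_mono: "n \<le> n' \<Longrightarrow> supergrid_vertices m n \<subseteq> supergrid_vertices m n'"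
  by (auto simp: supergrid_vertices_def)

lemma supergrid_adj_mono: "n \<le> n' \<Longrightarrow> supergrid_adj m n u v \<Longrightarrow> supergrid_adj m n' u v"
  using supergrid_vertices_mono by (auto simp: supergrid_adj_def)

lemma supergrid_adj_sym: "supergrid_adj m n u v \<longleftrightarrow> supergrid_adj m n v u"
  by (auto simp: supergrid_adj_def)

lemma is_path_mono: "n \<le> n' \<Longrightarrow> is_path m n P \<Longrightarrow> is_path m n' P"
  unfolding is_path_iff_successively
  by (metis supergrid_adj_mono supergrid_vertices_mono successively_mono order_trans)

lemma is_path_rev: "is_path m n (rev P) \<longleftrightarrow> is_path m n P"
  by (auto simp: is_path_iff_successively supergrid_adj_sym)

lemma is_path_append:
  assumes "is_path m n P" "is_path m n Q" "set P \<inter> set Q = {}"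
    and "supergrid_adj m n (last P) (hd Q)"
  shows "is_path m n (P @ Q)"
  using assms by (auto simp: is_path_iff_successively successively_append_iff)

lemma is_path_appendD:
  assumes "is_path m n (P @ Q)" "P \<noteq> []" "Q \<noteq> []"
  shows "is_path m n P" "is_path m n Q" "supergrid_adj m n (last P) (hd Q)"
  using assms by (auto simp: is_path_iff_successively successively_append_iff)

lemma ham_path_rev: "ham_path m n s t P \<Longrightarrow> ham_path m n t s (rev P)"
  by (auto simp: ham_path_def is_path_rev hd_rev last_rev)

lemma path_has_edge_sym: "path_has_edge P u v \<longleftrightarrow> path_has_edge P v u"
  unfolding path_has_edge_def by blast

lemma path_has_edge_append: "path_has_edge (xs @ u # v # ys) u v"
  unfolding path_has_edge_def by (rule exI[of _ "length xs"]) (simp add: nth_append)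


lemma ham_path_splice:
  assumes P: "ham_path m n s t (xs @ u # ys)" and "n \<le> n'"
    and B: "is_path m n' B" "set B = supergrid_vertices m n' - supergrid_vertices m n"
    and u_B: "supergrid_adj m n' u (hd B)"
    and B_ys: "ys \<noteq> [] \<Longrightarrow> supergrid_adj m n' (last B) (hd ys)"
  shows "ham_path m n' s (if ys = [] then last B else t) (xs @ u # B @ ys)"
proof -
  have dist: "distinct (xs @ u # ys)" and set_P: "set (xs @ u # ys) = supergrid_vertices m n"
    using P by (auto simp: ham_path_def is_path_def)
  have path: "is_path m n' ((xs @ [u]) @ ys)"
    using P is_path_mono[OF \<open>n \<le> n'\<close>] by (simp add: ham_path_def)
  have disj: "set B \<inter> set (xs @ u # ys) = {}"
    using B(2) set_P by blast
  have "is_path m n' (xs @ [u]) \<and> is_path m n' (B @ ys)"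
  proof (cases "ys = []")
    case False
    with path is_path_appendD[OF path] show ?thesis
      using B disj B_ys by (auto intro!: is_path_append)
  qed (use path B in simp)
  moreover have "B \<noteq> []"
    using B(1) by (simp add: is_path_def)
  ultimately have "is_path m n' (xs @ u # B @ ys)"
    using is_path_append[of m n' "xs @ [u]" "B @ ys"] u_B disj dist by auto
  moreover have "set (xs @ u # B @ ys) = supergrid_vertices m n'"
    using set_P B(2) supergrid_vertices_mono[OF \<open>n \<le> n'\<close>] by auto
  ultimately show ?thesis
    using P \<open>B \<noteq> []\<close> by (cases xs) (auto simp: ham_path_def)
qed

lemma supergrid_vertices_3_0: "supergrid_vertices 3 0 = {}"
  by (auto simp: supergrid_vertices_def)

lemma supergrid_vertices_3_Suc:
  "supergrid_vertices 3 (Suc n) =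
     insert (1, int n + 1) (insert (2, int n + 1) (insert (3, int n + 1) (supergrid_vertices 3 n)))"
proof -
  have "1 \<le> x \<Longrightarrow> x \<le> 3 \<Longrightarrow> x = 1 \<or> x = 2 \<or> x = 3" for x :: int by arith
  then show ?thesis by (auto simp: supergrid_vertices_def)
qed

lemma supergrid_vertices_3_2: "supergrid_vertices 3 2 = {(1,1), (2,1), (3,1), (1,2), (2,2), (3,2)}"
  using supergrid_vertices_3_Suc[of 0] supergrid_vertices_3_Suc[of 1] supergrid_vertices_3_0
  by (simp add: numeral_2_eq_2 insert_commute)

lemma supergrid_vertices_3_3:
  "supergrid_vertices 3 3 = {(1,1), (2,1), (3,1), (1,2), (2,2), (3,2), (1,3), (2,3), (3,3)}"
  using supergrid_vertices_3_Suc[of 2] supergrid_vertices_3_2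
  by (simp add: insert_commute)

lemma supergrid_vertices_3_new_row:
  "supergrid_vertices 3 (Suc n) - supergrid_vertices 3 n = {(1, int n + 1), (2, int n + 1), (3, int n + 1)}"
  by (auto simp: supergrid_vertices_3_Suc supergrid_vertices_def)

lemma supergrid_vertices_3_new_rows:
  "supergrid_vertices 3 (Suc (Suc n)) - supergrid_vertices 3 n =
     {(1, int n + 1), (2, int n + 1), (3, int n + 1), (1, int n + 2), (2, int n + 2), (3, int n + 2)}"
  by (auto simp: supergrid_vertices_3_Suc supergrid_vertices_def)

fun has_row_edge :: "int \<Rightarrow> vertex list \<Rightarrow> bool" where
  "has_row_edge y (u # v # P) \<longleftrightarrow> snd u = y \<and> snd v = y \<or> has_row_edge y (v # P)"
| "has_row_edge y _ \<longleftrightarrow> False"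

lemma has_row_edgeD:
  "has_row_edge y P \<Longrightarrow> \<exists>xs u v ys. P = xs @ u # v # ys \<and> snd u = y \<and> snd v = y"
proof (induction y P rule: has_row_edge.induct)
  case (1 y u v P)
  show ?case
  proof (cases "snd u = y \<and> snd v = y")
    case True
    then show ?thesis by (metis append_Nil)
  next
    case False
    with 1 obtain xs a b ys where "v # P = xs @ a # b # ys" "snd a = y" "snd b = y" by auto
    then show ?thesis by (metis append_Cons)
  qed
qed simp_all

lemma has_row_edge_Cons: "has_row_edge y P \<Longrightarrow> has_row_edge y (u # P)"
  by (cases P) auto

lemma has_row_edge_append_left: "has_row_edge y Q \<Longrightarrow> has_row_edge y (P @ Q)"
  by (induction P) (auto intro: has_row_edge_Cons)

lemma has_row_edge_append_right: "has_row_edge y P \<Longrightarrow> has_row_edge y (P @ Q)"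
  by (induction y P rule: has_row_edge.induct) auto

definition extensible_path :: "nat \<Rightarrow> vertex \<Rightarrow> vertex list \<Rightarrow> bool" where
  "extensible_path n t P \<longleftrightarrow>
     ham_path 3 n (2, 1) t P \<and> (\<exists>rest. P = (2, 1) # (1, 1) # rest) \<and> has_row_edge (int n) P"

lemma extensible_path_2:
  assumes "t \<in> supergrid_vertices 3 2" "fst t = 3"
  shows "\<exists>P. extensible_path 2 t P"
proof -
  have "extensible_path 2 (3, 1) [(2,1), (1,1), (1,2), (2,2), (3,2), (3,1)]"
    and "extensible_path 2 (3, 2) [(2,1), (1,1), (1,2), (2,2), (3,1), (3,2)]"
    by (simp_all add: extensible_path_def ham_path_def is_path_iff_successively supergrid_adj_def
        supergrid_vertices_3_2 insert_commute)
  moreover have "t \<in> {(3, 1), (3, 2)}"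
    using assms by (auto simp: supergrid_vertices_3_2)
  ultimately show ?thesis by blast
qed

lemma extensible_path_3:
  assumes "t \<in> supergrid_vertices 3 3" "t \<notin> {(1, 1), (2, 1)}"
  shows "\<exists>P. extensible_path 3 t P"
proof -
  have "extensible_path 3 (3, 1) [(2,1), (1,1), (1,2), (1,3), (2,3), (3,3), (3,2), (2,2), (3,1)]"
    and "extensible_path 3 (1, 2) [(2,1), (1,1), (2,2), (3,1), (3,2), (3,3), (2,3), (1,3), (1,2)]"
    and "extensible_path 3 (2, 2) [(2,1), (1,1), (1,2), (1,3), (2,3), (3,3), (3,2), (3,1), (2,2)]"
    and "extensible_path 3 (3, 2) [(2,1), (1,1), (1,2), (1,3), (2,3), (3,3), (2,2), (3,1), (3,2)]"
    and "extensible_path 3 (1, 3) [(2,1), (1,1), (1,2), (2,2), (3,1), (3,2), (3,3), (2,3), (1,3)]"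
    and "extensible_path 3 (2, 3) [(2,1), (1,1), (1,2), (1,3), (2,2), (3,1), (3,2), (3,3), (2,3)]"
    and "extensible_path 3 (3, 3) [(2,1), (1,1), (1,2), (1,3), (2,3), (2,2), (3,1), (3,2), (3,3)]"
    by (simp_all add: extensible_path_def ham_path_def is_path_iff_successively supergrid_adj_def
        supergrid_vertices_3_3 insert_commute)
  moreover have "t \<in> {(3, 1), (1, 2), (2, 2), (3, 2), (1, 3), (2, 3), (3, 3)}"
    using assms by (auto simp: supergrid_vertices_3_3)
  ultimately show ?thesis by blast
qed

lemma extensible_path_add_row:
  assumes P: "extensible_path n t P" and "n \<ge> 2"
  shows "\<exists>P'. extensible_path (Suc n) t P'"
proof -
  obtain rest where ham: "ham_path 3 n (2, 1) t P" and P_rest: "P = (2, 1) # (1, 1) # rest"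
    and "has_row_edge (int n) P"
    using P by (auto simp: extensible_path_def)
  then obtain xs u v ys where P_uv: "P = xs @ u # v # ys" and "snd u = int n" "snd v = int n"
    using has_row_edgeD by blast
  then obtain a b where u: "u = (a, int n)" and v: "v = (b, int n)"
    by (metis prod.collapse)
  have "supergrid_adj 3 n u v"
    using ham is_path_appendD(3)[of 3 n "xs @ [u]" "v # ys"] by (simp add: ham_path_def P_uv)
  then have ab: "1 \<le> a" "a \<le> 3" "1 \<le> b" "b \<le> 3" "a \<noteq> b"
    by (auto simp: supergrid_adj_def u v)
  define row where "row = [(1, int n + 1), (2, int n + 1), (3 :: int, int n + 1)]"
  define D where "D = (if a < b then row else rev row)"
  have D: "is_path 3 (Suc n) D" "set D = supergrid_vertices 3 (Suc n) - supergrid_vertices 3 n"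
    "supergrid_adj 3 (Suc n) u (hd D)" "supergrid_adj 3 (Suc n) (last D) v"
    "has_row_edge (int (Suc n)) D"
    using ab \<open>n \<ge> 2\<close>
    by (auto simp: D_def row_def u v is_path_iff_successively supergrid_adj_def
        supergrid_vertices_3_new_row)
  have "ham_path 3 (Suc n) (2, 1) t (xs @ u # D @ v # ys)"
    using ham_path_splice[of 3 n "(2, 1)" t xs u "v # ys" "Suc n" D] ham D
    by (simp add: P_uv)
  moreover obtain xs' where "xs = (2, 1) # (1, 1) # xs'"
  proof -
    have "u \<noteq> (2, 1)" "u \<noteq> (1, 1)"
      using \<open>snd u = int n\<close> \<open>n \<ge> 2\<close> by auto
    then show ?thesis
      using that P_rest unfolding P_uv by (cases xs; cases "tl xs") auto
  qed
  moreover have "has_row_edge (int (Suc n)) (xs @ u # D @ v # ys)"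
    using has_row_edge_append_left[OF has_row_edge_append_right[OF D(5)], of "xs @ [u]"] by simp
  ultimately show ?thesis
    unfolding extensible_path_def by auto
qed

lemma two_rows_path:
  assumes "1 \<le> a" "a \<le> 3"
  shows "\<exists>B. is_path 3 (n + 2) B \<and> set B = supergrid_vertices 3 (n + 2) - supergrid_vertices 3 n
    \<and> hd B = (3, int n + 1) \<and> last B = (a, int n + 2) \<and> has_row_edge (int n + 2) B"
    (is "\<exists>B. ?two_rows B")
proof -
  consider "a = 1" | "a = 2" | "a = 3"
    using assms by linarith
  then show ?thesis
  proof cases
    case 1
    then have "?two_rows
        [(3, int n + 1), (3, int n + 2), (2, int n + 2), (2, int n + 1), (1, int n + 1), (1, int n + 2)]"
      by (simp add: supergrid_vertices_3_new_rows is_path_iff_successively supergrid_adj_def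
          insert_commute)
    then show ?thesis ..
  next
    case 2
    then have "?two_rows
        [(3, int n + 1), (3, int n + 2), (2, int n + 1), (1, int n + 1), (1, int n + 2), (2, int n + 2)]"
      by (simp add: supergrid_vertices_3_new_rows is_path_iff_successively supergrid_adj_def
          insert_commute)
    then show ?thesis ..
  next
    case 3
    then have "?two_rows
        [(3, int n + 1), (2, int n + 1), (1, int n + 1), (1, int n + 2), (2, int n + 2), (3, int n + 2)]"
      by (simp add: supergrid_vertices_3_new_rows is_path_iff_successively supergrid_adj_def
          insert_commute)
    then show ?thesis ..
  qed
qed

lemma extensible_path_add_two_rows:
  assumes P: "extensible_path n (3, int n) P" and a: "1 \<le> a" "a \<le> 3"
  shows "\<exists>P'. extensible_path (n + 2) (a, int n + 2) P'"
proof -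
  obtain rest where ham: "ham_path 3 n (2, 1) (3, int n) P" and P_rest: "P = (2, 1) # (1, 1) # rest"
    using P by (auto simp: extensible_path_def)
  have "n \<ge> 1"
    using ham by (auto simp: ham_path_def is_path_def P_rest)
  obtain B where B: "is_path 3 (n + 2) B"
    "set B = supergrid_vertices 3 (n + 2) - supergrid_vertices 3 n"
    "hd B = (3, int n + 1)" "last B = (a, int n + 2)" "has_row_edge (int n + 2) B"
    using two_rows_path[OF a] by blast
  obtain xs where P_last: "P = xs @ [(3, int n)]"
    using ham by (metis ham_path_def is_path_def append_butlast_last_id)
  have "ham_path 3 (n + 2) (2, 1) (a, int n + 2) (P @ B)"
    using ham_path_splice[of 3 n "(2, 1)" "(3, int n)" xs "(3, int n)" "[]" "n + 2" B] ham B \<open>n \<ge> 1\<close>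
    by (simp add: P_last supergrid_adj_def)
  moreover have "has_row_edge (int (n + 2)) (P @ B)"
    using has_row_edge_append_left[OF B(5), of P] by (simp add: add.commute)
  ultimately show ?thesis
    unfolding extensible_path_def using P_rest by auto
qed

lemma extensible_path_exists:
  assumes "n \<ge> 2" "t \<in> supergrid_vertices 3 n" "t \<notin> {(1, 1), (2, 1)}" "n = 2 \<Longrightarrow> fst t = 3"
  shows "\<exists>P. extensible_path n t P"
  using assms
proof (induction n arbitrary: t rule: less_induct)
  case (less n)
  obtain a b where t: "t = (a, b)"
    by fastforce
  consider "n = 2" | "n = 3" | "n \<ge> 4"
    using \<open>n \<ge> 2\<close> by linarith
  then show ?case
  proof cases
    case 1
    then show ?thesis
      using less.prems extensible_path_2 by simp
  next
    case 2
    then show ?thesis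
      using less.prems extensible_path_3 by simp
  next
    case 3
    define k where "k = n - 2"
    have "n = k + 2" "k \<ge> 2"
      using 3 by (simp_all add: k_def)
    show ?thesis
    proof (cases "b < int n")
      case True
      then have "t \<in> supergrid_vertices 3 (k + 1)"
        using less.prems(2) \<open>n = k + 2\<close> by (auto simp: t)
      then obtain P where "extensible_path (k + 1) t P"
        using less.IH[of "k + 1" t] less.prems(3) \<open>n = k + 2\<close> \<open>k \<ge> 2\<close> by auto
      then show ?thesis
        using extensible_path_add_row[of "k + 1" t P] \<open>n = k + 2\<close> \<open>k \<ge> 2\<close> by auto
    next
      case False
      obtain P where "extensible_path k (3, int k) P"
        using less.IH[of k "(3, int k)"] \<open>n = k + 2\<close> \<open>k \<ge> 2\<close> by auto
      moreover have "1 \<le> a" "a \<le> 3" "b = int k + 2"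
        using less.prems(2) False \<open>n = k + 2\<close> by (auto simp: t)
      ultimately show ?thesis
        using extensible_path_add_two_rows \<open>n = k + 2\<close> t by blast
    qed
  qed
qed

theorem lemma5:
  fixes n :: nat and s t :: vertex
  defines "w \<equiv> (1, 1) :: vertex" and "z \<equiv> (2, 1) :: vertex"
  assumes n2: "n \<ge> 2"
    and s_in: "s \<in> supergrid_vertices 3 n" and t_in: "t \<in> supergrid_vertices 3 n"
    and st: "s \<noteq> t"
    and notF1: "\<not> (n = 2 \<and> fst s = 2 \<and> fst t = 2)"
    and notF2: "\<not> ((n = 2 \<and> {s, t} \<in> {{(1,1),(2,1)}, {(1,1),(2,2)}, {(2,1),(1,2)}})
                    \<or> (n \<ge> 3 \<and> {s, t} = {w, z}))"
    and sz: "s = z \<or> t = z"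
  shows "\<exists>Q. ham_path 3 n s t Q \<and> path_has_edge Q w z"
proof -
  define e where "e = (if s = z then t else s)"
  have e_in: "e \<in> supergrid_vertices 3 n" and e_ne: "e \<noteq> w" "e \<noteq> z"
    using s_in t_in st sz notF2 n2 by (auto simp: e_def w_def z_def insert_commute)
  have "fst e = 3" if "n = 2"
  proof -
    have "e \<noteq> (1, 2)" "e \<noteq> (2, 2)"
      using that notF1 notF2 sz by (auto simp: e_def z_def insert_commute)
    then show ?thesis
      using e_in e_ne that by (auto simp: supergrid_vertices_3_2 w_def z_def)
  qed
  then obtain P where "extensible_path n e P"
    using extensible_path_exists[OF n2 e_in] e_ne by (auto simp: w_def z_def)
  then obtain rest where ham: "ham_path 3 n z e P" and P: "P = z # w # rest"
    by (auto simp: extensible_path_def w_def z_def)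
  show ?thesis
  proof (cases "s = z")
    case True
    then show ?thesis
      using ham path_has_edge_append[of "[]" z w rest] path_has_edge_sym
      by (auto simp: P e_def)
  next
    case False
    then show ?thesis
      using ham_path_rev[OF ham] path_has_edge_append[of "rev rest" w z "[]"] sz
      by (auto simp: P e_def)
  qed
qed

end
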